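(* Let $n \ge 2$ and $L$ be integers with $2 \le L \le n+1$. On the grid $\{1,\dots,n\}^2$ consider the following subsets: the lines $L_i = \{(i,k) : 1 \le k \le n\}$ for $1 \le i \le n$; the columns $C_j = \{(k,j) : 1 \le k \le n\}$ for $1 \le j \le n$; and, for each slope $a \in \{1,\dots,L-2\}$ and each $b \in \{1,\dots,n\}$, the diagonal $D^a_b = \{(k, r_n(ak+b)) : 1 \le k \le n\}$, where $r_n(m)$ denotes the unique element of $\{1,\dots,n\}$ congruent to $m$ modulo $n$. Then the family $\{L_k, C_k, D^a_k : 1 \le k \le n,\ 1 \le a \le L-2\}$ is an $N(n^2,n,L)$ multipool if and only if $L-2$ is smaller than the smallest prime divisor of $n$.
   Context: A family of subsets (pools) of a set of $n^2$ items is called an $N(n^2,n,L)$ multipool if: (1) each pool contains exactly $n$ items; (2) each item belongs to exactly $L$ pools; (3) any two distinct items belong to at most one common pool. *)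

theory Defs
  imports "HOL-Computational_Algebra.Primes"
begin

definition multipool :: "nat \<Rightarrow> nat \<Rightarrow> nat \<Rightarrow> 'a set \<Rightarrow> 'i set \<Rightarrow> ('i \<Rightarrow> 'a set) \<Rightarrow> bool" where
  "multipool m n L X I P \<longleftrightarrow>
     finite X \<and> card X = m \<and> finite I \<and>
     (\<forall>i\<in>I. P i \<subseteq> X \<and> card (P i) = n) \<and>
     (\<forall>x\<in>X. card {i\<in>I. x \<in> P i} = L) \<and>
     (\<forall>x\<in>X. \<forall>y\<in>X. x \<noteq> y \<longrightarrow> card {i\<in>I. x \<in> P i \<and> y \<in> P i} \<le> 1)"

definition rn :: "nat \<Rightarrow> int \<Rightarrow> nat" where
  "rn n m = nat (((m - 1) mod int n) + 1)"

datatype pool_idx = Line nat | Col nat | Diag nat nat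

definition grid :: "nat \<Rightarrow> (nat \<times> nat) set" where
  "grid n = {1..n} \<times> {1..n}"

definition grid_pool :: "nat \<Rightarrow> pool_idx \<Rightarrow> (nat \<times> nat) set" where
  "grid_pool n p = (case p of
       Line i \<Rightarrow> {(i, k) | k. 1 \<le> k \<and> k \<le> n}
     | Col j \<Rightarrow> {(k, j) | k. 1 \<le> k \<and> k \<le> n}
     | Diag a b \<Rightarrow> {(k, rn n (int a * int k + int b)) | k. 1 \<le> k \<and> k \<le> n})"

definition grid_index :: "nat \<Rightarrow> nat \<Rightarrow> pool_idx set" where
  "grid_index n L = Line ` {1..n} \<union> Col ` {1..n} \<union>
     {Diag a b | a b. 1 \<le> a \<and> a \<le> L - 2 \<and> 1 \<le> b \<and> b \<le> n}"

definition smallest_prime_divisor :: "nat \<Rightarrow> nat" where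
  "smallest_prime_divisor n = Min {p. prime p \<and> p dvd n}"

end

theory Submission
  imports Defs "HOL-Number_Theory.Cong"
begin

(* Read the grid as (Z/nZ)^2. The pools are the lines x = i, the lines y = j of slope 0 and the
   lines y = a x + b of slope a in {1..L-2}; every point lies on exactly one line of each slope,
   hence on L pools. If two lines of slopes a and a' both pass through two points with first
   coordinates x1 and x2, then (a - a') (x1 - x2) = 0 mod n. So distinct pools meet at most once
   as soon as all slope differences 1, ..., L-2 are units mod n, i.e. L - 2 is smaller than the
   smallest prime factor of n. Conversely, if c <= L - 2 is not coprime to n, then c d = 0 mod n
   for d = n div gcd c n < n, and the line of slope c through (1,1) meets the line y = 1 again
   in (1 + d, 1). *)

lemma rn_range:
  assumes "0 < n"
  shows "rn n m \<in> {1..n}"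
  using assms pos_mod_bound[of "int n" "m - 1"] pos_mod_sign[of "int n" "m - 1"]
  unfolding rn_def atLeastAtMost_iff by linarith

lemma rn_cong:
  assumes "0 < n"
  shows "[int (rn n m) = m] (mod int n)"
proof -
  have "int (rn n m) = (m - 1) mod int n + 1"
    unfolding rn_def using assms pos_mod_sign[of "int n" "m - 1"] by simp
  also have "[\<dots> = (m - 1) + 1] (mod int n)"
    by (intro cong_add) simp_all
  finally show ?thesis by simp
qed

lemma cong_atLeastAtMost_imp_eq:
  assumes "x \<in> {1..n}" "y \<in> {1..n}" "[int x = int y] (mod int n)"
  shows "x = y"
  using cong_less_imp_eq_int[of "int x - 1" "int n" "int y - 1"] assms
  by (auto simp: cong_diff)

lemma rn_eq_iff: "0 < n \<Longrightarrow> rn n m = y \<longleftrightarrow> y \<in> {1..n} \<and> [m = int y] (mod int n)"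
  using rn_range rn_cong cong_atLeastAtMost_imp_eq cong_sym cong_trans by metis

lemma mem_grid_pool_Line: "(x, y) \<in> grid_pool n (Line i) \<longleftrightarrow> x = i \<and> y \<in> {1..n}"
  by (auto simp: grid_pool_def)

lemma mem_grid_pool_Col: "(x, y) \<in> grid_pool n (Col j) \<longleftrightarrow> x \<in> {1..n} \<and> y = j"
  by (auto simp: grid_pool_def)

lemma mem_grid_pool_Diag:
  assumes "0 < n"
  shows "(x, y) \<in> grid_pool n (Diag a b) \<longleftrightarrow>
    x \<in> {1..n} \<and> y \<in> {1..n} \<and> [int a * int x + int b = int y] (mod int n)"
proof -
  have "(x, y) \<in> grid_pool n (Diag a b) \<longleftrightarrow> x \<in> {1..n} \<and> rn n (int a * int x + int b) = y"
    by (auto simp: grid_pool_def)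
  then show ?thesis using rn_eq_iff[OF assms] by auto
qed

lemma grid_index_iff [simp]:
  "Line i \<in> grid_index n L \<longleftrightarrow> i \<in> {1..n}"
  "Col j \<in> grid_index n L \<longleftrightarrow> j \<in> {1..n}"
  "Diag a b \<in> grid_index n L \<longleftrightarrow> a \<in> {1..L - 2} \<and> b \<in> {1..n}"
  by (auto simp: grid_index_def)

lemma finite_grid_index: "finite (grid_index n L)"
proof -
  have "grid_index n L = Line ` {1..n} \<union> Col ` {1..n} \<union> case_prod Diag ` ({1..L-2} \<times> {1..n})"
    unfolding grid_index_def by auto
  then show ?thesis by simp
qed

lemma card_grid_pool: "card (grid_pool n i) = n"
proof (cases i)
  case (Line k)
  then have "grid_pool n i = (\<lambda>t. (k, t)) ` {1..n}" by (auto simp: grid_pool_def)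
  then show ?thesis by (simp add: card_image inj_on_def)
next
  case (Col k)
  then have "grid_pool n i = (\<lambda>t. (t, k)) ` {1..n}" by (auto simp: grid_pool_def)
  then show ?thesis by (simp add: card_image inj_on_def)
next
  case (Diag a b)
  then have "grid_pool n i = (\<lambda>t. (t, rn n (int a * int t + int b))) ` {1..n}"
    by (auto simp: grid_pool_def)
  then show ?thesis by (simp add: card_image inj_on_def)
qed

lemma grid_pool_subset_grid: "0 < n \<Longrightarrow> i \<in> grid_index n L \<Longrightarrow> grid_pool n i \<subseteq> grid n"
  by (cases i) (auto simp: grid_def mem_grid_pool_Line mem_grid_pool_Col mem_grid_pool_Diag)

lemma cong_affine_intercept_unique:
  fixes a b b' x y n :: "'a::unique_euclidean_ring"
  assumes "[a * x + b = y] (mod n)" "[a * x + b' = y] (mod n)"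
  shows "[b = b'] (mod n)"
  using cong_trans[OF assms(1) cong_sym[OF assms(2)]] by (simp add: cong_add_lcancel)

lemma cong_affine_intersection_unique:
  fixes a a' b b' x1 x2 y1 y2 n :: "'a::{unique_euclidean_ring, ring_gcd}"
  assumes "coprime (a - a') n"
    and "[a * x1 + b = y1] (mod n)" "[a * x2 + b = y2] (mod n)"
    and "[a' * x1 + b' = y1] (mod n)" "[a' * x2 + b' = y2] (mod n)"
  shows "[x1 = x2] (mod n)"
proof -
  have "[(a * x1 + b) - (a * x2 + b) - ((a' * x1 + b') - (a' * x2 + b'))
      = (y1 - y2) - (y1 - y2)] (mod n)"
    using assms(2-5) by (intro cong_diff)
  also have "(y1 - y2) - (y1 - y2) = 0" by simp
  also have "(a * x1 + b) - (a * x2 + b) - ((a' * x1 + b') - (a' * x2 + b'))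
      = (a - a') * x1 - (a - a') * x2" by (simp add: algebra_simps)
  finally have "[(a - a') * x1 = (a - a') * x2] (mod n)"
    by (simp only: cong_diff_iff_cong_0)
  then show ?thesis using assms(1) by (simp add: cong_mult_lcancel)
qed

lemma coprime_diff_below:
  assumes "\<forall>c\<in>{1..k}. coprime c n" "a \<le> k" "a' \<le> k" "a \<noteq> a'"
  shows "coprime (int a - int a') (int n)"
proof -
  have "nat \<bar>int a - int a'\<bar> \<in> {1..k}" using assms(2-4) by auto
  then have "coprime (nat \<bar>int a - int a'\<bar>) n" using assms(1) by blast
  then show ?thesis by simp
qed

lemma Diag_two_points_distinct_coords:
  assumes "0 < n" "\<forall>c\<in>{1..L - 2}. coprime c n" "Diag a b \<in> grid_index n L"
    and "(x1, y1) \<in> grid_pool n (Diag a b)" "(x2, y2) \<in> grid_pool n (Diag a b)"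
    and "(x1, y1) \<noteq> (x2, y2)"
  shows "x1 \<noteq> x2 \<and> y1 \<noteq> y2"
proof -
  have range: "x1 \<in> {1..n}" "y1 \<in> {1..n}" "x2 \<in> {1..n}" "y2 \<in> {1..n}"
    and on1: "[int a * int x1 + int b = int y1] (mod int n)"
    and on2: "[int a * int x2 + int b = int y2] (mod int n)"
    using assms(4,5) mem_grid_pool_Diag[OF assms(1)] by auto
  have "x1 \<noteq> x2"
  proof
    assume "x1 = x2"
    then have "[int y1 = int y2] (mod int n)" using on1 on2 cong_sym cong_trans by metis
    then show False using \<open>x1 = x2\<close> assms(6) range cong_atLeastAtMost_imp_eq by blast
  qed
  moreover have "y1 \<noteq> y2"
  proof
    assume "y1 = y2"
    \<comment> \<open>the line y = y1 is the line of slope 0 through both points\<close>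
    have "coprime (int a - int 0) (int n)"
      using assms(3) by (intro coprime_diff_below[OF assms(2)]) auto
    moreover have "[int 0 * int x1 + int y1 = int y1] (mod int n)"
      and "[int 0 * int x2 + int y1 = int y2] (mod int n)"
      using \<open>y1 = y2\<close> by simp_all
    ultimately have "[int x1 = int x2] (mod int n)"
      using on1 on2 by (blast intro: cong_affine_intersection_unique)
    then show False using \<open>y1 = y2\<close> assms(6) range cong_atLeastAtMost_imp_eq by blast
  qed
  ultimately show ?thesis ..
qed

lemma Diags_through_two_points_eq:
  assumes "0 < n" "\<forall>c\<in>{1..L - 2}. coprime c n"
    and "Diag a b \<in> grid_index n L" "Diag a' b' \<in> grid_index n L"
    and "(x1, y1) \<in> grid_pool n (Diag a b)" "(x2, y2) \<in> grid_pool n (Diag a b)"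
    and "(x1, y1) \<in> grid_pool n (Diag a' b')" "(x2, y2) \<in> grid_pool n (Diag a' b')"
    and "(x1, y1) \<noteq> (x2, y2)"
  shows "a = a' \<and> b = b'"
proof -
  have range: "x1 \<in> {1..n}" "x2 \<in> {1..n}"
    and on: "[int a * int x1 + int b = int y1] (mod int n)"
      "[int a * int x2 + int b = int y2] (mod int n)"
      "[int a' * int x1 + int b' = int y1] (mod int n)"
      "[int a' * int x2 + int b' = int y2] (mod int n)"
    using assms(5-8) mem_grid_pool_Diag[OF assms(1)] by auto
  have "a = a'"
  proof (rule ccontr)
    assume "a \<noteq> a'"
    then have "coprime (int a - int a') (int n)"
      using assms(3,4) by (intro coprime_diff_below[OF assms(2)]) auto
    then have "[int x1 = int x2] (mod int n)"
      using on by (blast intro: cong_affine_intersection_unique)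
    then have "x1 = x2" using range cong_atLeastAtMost_imp_eq by blast
    then show False using Diag_two_points_distinct_coords[OF assms(1-3,5,6,9)] by blast
  qed
  moreover have "b = b'"
  proof -
    have "[int b = int b'] (mod int n)"
      using on(1,3) \<open>a = a'\<close> by (blast intro: cong_affine_intercept_unique)
    then show ?thesis using assms(3,4) cong_atLeastAtMost_imp_eq by auto
  qed
  ultimately show ?thesis ..
qed

lemma grid_pools_meet_at_most_once:
  assumes "0 < n" "\<forall>c\<in>{1..L - 2}. coprime c n" "u \<noteq> v"
    and "i \<in> grid_index n L" "u \<in> grid_pool n i" "v \<in> grid_pool n i"
    and "j \<in> grid_index n L" "u \<in> grid_pool n j" "v \<in> grid_pool n j"
  shows "i = j"
proof -
  obtain x1 y1 x2 y2 where u: "u = (x1, y1)" and v: "v = (x2, y2)" by fastforce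
  have Diag_through: "x1 \<noteq> x2 \<and> y1 \<noteq> y2"
    if "Diag a b \<in> grid_index n L" "u \<in> grid_pool n (Diag a b)" "v \<in> grid_pool n (Diag a b)"
    for a b
    using Diag_two_points_distinct_coords[OF assms(1,2)] that assms(3) u v by blast
  have Diags_through: "Diag a b = Diag a' b'"
    if "Diag a b \<in> grid_index n L" "u \<in> grid_pool n (Diag a b)" "v \<in> grid_pool n (Diag a b)"
      "Diag a' b' \<in> grid_index n L" "u \<in> grid_pool n (Diag a' b')" "v \<in> grid_pool n (Diag a' b')"
    for a b a' b'
    using Diags_through_two_points_eq[OF assms(1,2)] that assms(3) u v by blast
  show ?thesis
    using assms(3-9) Diag_through Diags_through
    by (cases i; cases j) (auto simp: u v mem_grid_pool_Line mem_grid_pool_Col simp del: grid_index_iff)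
qed

lemma Diag_through_point_iff:
  assumes "0 < n" "x \<in> {1..n}" "y \<in> {1..n}"
  shows "(x, y) \<in> grid_pool n (Diag a b) \<and> b \<in> {1..n} \<longleftrightarrow> rn n (int y - int a * int x) = b"
proof -
  have "[int a * int x + int b = int y] (mod int n) \<longleftrightarrow> [int y - int a * int x = int b] (mod int n)"
    by (metis add_diff_cancel_left' cong_add_lcancel cong_sym_eq diff_add_cancel)
  then show ?thesis using assms by (simp add: mem_grid_pool_Diag rn_eq_iff conj_commute)
qed

lemma pools_through_point:
  assumes "0 < n" "(x, y) \<in> grid n"
  shows "{i \<in> grid_index n L. (x, y) \<in> grid_pool n i} =
    {Line x, Col y} \<union> (\<lambda>a. Diag a (rn n (int y - int a * int x))) ` {1..L - 2}"
proof (rule set_eqI)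
  fix i
  show "i \<in> {i \<in> grid_index n L. (x, y) \<in> grid_pool n i} \<longleftrightarrow>
    i \<in> {Line x, Col y} \<union> (\<lambda>a. Diag a (rn n (int y - int a * int x))) ` {1..L - 2}"
  proof (cases i)
    case (Diag a b)
    then show ?thesis
      using assms Diag_through_point_iff[OF assms(1), of x y a b] by (auto simp: grid_def image_iff)
  qed (use assms in \<open>auto simp: grid_def mem_grid_pool_Line mem_grid_pool_Col\<close>)
qed

lemma card_pools_through_point:
  assumes "0 < n" "2 \<le> L" "u \<in> grid n"
  shows "card {i \<in> grid_index n L. u \<in> grid_pool n i} = L"
proof -
  obtain x y where u: "u = (x, y)" by fastforce
  let ?D = "\<lambda>a. Diag a (rn n (int y - int a * int x))"
  have "inj_on ?D {1..L - 2}" by (auto simp: inj_on_def)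
  then have "card ({Line x, Col y} \<union> ?D ` {1..L - 2}) = 2 + (L - 2)"
    by (subst card_Un_disjoint) (auto simp: card_image)
  then show ?thesis
    unfolding u pools_through_point[OF assms(1) assms(3)[unfolded u]] using assms(2) by simp
qed

lemma grid_multipool:
  assumes "0 < n" "2 \<le> L" "\<forall>c\<in>{1..L - 2}. coprime c n"
  shows "multipool (n^2) n L (grid n) (grid_index n L) (grid_pool n)"
  unfolding multipool_def
proof (intro conjI ballI impI)
  show "finite (grid n)" "card (grid n) = n^2" "finite (grid_index n L)"
    by (simp_all add: grid_def power2_eq_square finite_grid_index)
next
  fix i assume "i \<in> grid_index n L"
  then show "grid_pool n i \<subseteq> grid n" "card (grid_pool n i) = n"
    using grid_pool_subset_grid[OF assms(1)] card_grid_pool by blast+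
next
  fix u assume "u \<in> grid n"
  then show "card {i \<in> grid_index n L. u \<in> grid_pool n i} = L"
    by (rule card_pools_through_point[OF assms(1,2)])
next
  fix u v assume "u \<in> grid n" "v \<in> grid n" "u \<noteq> v"
  have "finite {i \<in> grid_index n L. u \<in> grid_pool n i \<and> v \<in> grid_pool n i}"
    using finite_grid_index by simp
  then show "card {i \<in> grid_index n L. u \<in> grid_pool n i \<and> v \<in> grid_pool n i} \<le> 1"
    using grid_pools_meet_at_most_once[OF assms(1,3) \<open>u \<noteq> v\<close>]
    by (simp add: card_le_Suc0_iff_eq)
qed

lemma not_coprime_imp_zero_divisor:
  fixes c n :: nat
  assumes "0 < n" "\<not> coprime c n"
  obtains d where "0 < d" "d < n" "n dvd c * d"
proof
  let ?g = "gcd c n"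
  have "0 < ?g" "?g \<le> n" using assms(1) by simp_all
  then show "0 < n div ?g" by (simp add: div_greater_zero_iff)
  have "?g \<noteq> 1" using assms(2) by (simp add: coprime_iff_gcd_eq_1)
  with \<open>0 < ?g\<close> have "1 < ?g" by linarith
  then show "n div ?g < n" using assms(1) by simp
  have "c * (n div ?g) = c div ?g * n" by (simp add: div_mult_swap dvd_div_mult)
  then show "n dvd c * (n div ?g)" by simp
qed

lemma multipool_grid_imp_coprime:
  assumes "multipool m n L (grid n) (grid_index n L) (grid_pool n)" "0 < n" "c \<in> {1..L - 2}"
  shows "coprime c n"
proof (rule ccontr)
  assume "\<not> coprime c n"
  then obtain d where d: "0 < d" "d < n" "n dvd c * d"
    using not_coprime_imp_zero_divisor[OF assms(2)] by blast
  define b where "b = rn n (1 - int c)"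
  have b: "b \<in> {1..n}" "[int b = 1 - int c] (mod int n)"
    unfolding b_def using rn_range rn_cong assms(2) by simp_all
  have on_Diag: "(1 + t, 1) \<in> grid_pool n (Diag c b)" if "t \<in> {0, d}" for t
  proof -
    have "[int c * int t = 0] (mod int n)"
      using that d(3) by (auto simp: cong_0_iff simp flip: of_nat_mult)
    then have "[int c * int t + (int c + int b) = 0 + (int c + (1 - int c))] (mod int n)"
      using b(2) by (intro cong_add cong_refl)
    then have "[int c * int (1 + t) + int b = int 1] (mod int n)"
      by (simp add: algebra_simps)
    then show ?thesis using that d(2) assms(2) by (auto simp: mem_grid_pool_Diag)
  qed
  let ?S = "{i \<in> grid_index n L. (1, 1) \<in> grid_pool n i \<and> (1 + d, 1) \<in> grid_pool n i}"
  have "{Col 1, Diag c b} \<subseteq> ?S"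
    using on_Diag[of 0] on_Diag[of d] assms(2,3) b(1) d(2) by (auto simp: mem_grid_pool_Col)
  moreover have "finite ?S" using finite_grid_index by simp
  ultimately have "2 \<le> card ?S" using card_mono[of ?S "{Col 1, Diag c b}"] by simp
  have "(1, 1) \<in> grid n" "(1 + d, 1) \<in> grid n" "(1, 1) \<noteq> (1 + d, 1)"
    using d(1,2) by (auto simp: grid_def)
  with assms(1) have "card ?S \<le> 1" unfolding multipool_def by blast
  with \<open>2 \<le> card ?S\<close> show False by simp
qed

lemma smallest_prime_divisor:
  assumes "2 \<le> n"
  shows "prime (smallest_prime_divisor n)" "smallest_prime_divisor n dvd n"
    and "prime p \<Longrightarrow> p dvd n \<Longrightarrow> smallest_prime_divisor n \<le> p"
proof -
  let ?P = "{p. prime p \<and> p dvd n}"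
  have fin: "finite ?P"
    using assms by (intro finite_subset[OF _ finite_divisors_nat[of n]]) auto
  have "?P \<noteq> {}"
    using assms prime_factor_nat[of n] by auto
  from Min_in[OF fin this]
  show "prime (smallest_prime_divisor n)" "smallest_prime_divisor n dvd n"
    unfolding smallest_prime_divisor_def by simp_all
  show "prime p \<Longrightarrow> p dvd n \<Longrightarrow> smallest_prime_divisor n \<le> p"
    unfolding smallest_prime_divisor_def using fin by simp
qed

lemma coprime_upto_iff_less_smallest_prime_divisor:
  assumes "2 \<le> n"
  shows "(\<forall>c\<in>{1..k}. coprime c n) \<longleftrightarrow> k < smallest_prime_divisor n"
proof
  assume coprime: "\<forall>c\<in>{1..k}. coprime c n"
  let ?p = "smallest_prime_divisor n"
  have "\<not> coprime ?p n"
    using smallest_prime_divisor(1,2)[OF assms] coprime_common_divisor[of ?p n ?p] by auto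
  moreover have "1 \<le> ?p" using prime_ge_1_nat[OF smallest_prime_divisor(1)[OF assms]] .
  ultimately show "k < ?p" using coprime by (meson atLeastAtMost_iff not_less)
next
  assume k: "k < smallest_prime_divisor n"
  show "\<forall>c\<in>{1..k}. coprime c n"
  proof
    fix c assume c: "c \<in> {1..k}"
    show "coprime c n"
    proof (rule ccontr)
      assume "\<not> coprime c n"
      then have "gcd c n \<noteq> 1" by (simp add: coprime_iff_gcd_eq_1)
      then obtain p where "prime p" "p dvd gcd c n" using prime_factor_nat by blast
      then have p: "prime p" "p dvd c" "p dvd n" by simp_all
      then have "p \<le> c" using c by (simp add: dvd_imp_le)
      moreover have "smallest_prime_divisor n \<le> p" using smallest_prime_divisor(3)[OF assms p(1,3)] .
      ultimately show False using c k by simp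
    qed
  qed
qed

theorem lemma1:
  fixes n L :: nat
  assumes "n \<ge> 2" and "2 \<le> L" and "L \<le> n + 1"
  shows "multipool (n^2) n L (grid n) (grid_index n L) (grid_pool n)
           \<longleftrightarrow> L - 2 < smallest_prime_divisor n"
proof -
  have "0 < n" using assms(1) by simp
  have "multipool (n^2) n L (grid n) (grid_index n L) (grid_pool n) \<longleftrightarrow>
      (\<forall>c\<in>{1..L - 2}. coprime c n)"
    using multipool_grid_imp_coprime[OF _ \<open>0 < n\<close>] grid_multipool[OF \<open>0 < n\<close> assms(2)]
    by blast
  also have "\<dots> \<longleftrightarrow> L - 2 < smallest_prime_divisor n"
    using assms(1) by (rule coprime_upto_iff_less_smallest_prime_divisor)
  finally show ?thesis .
qed

end
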